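(* Let $T_1,T_2,T_3$ be binary trees on $[n]$. For the JC model and for the K2P model: if there is a four-element set $Q\subseteq[n]$ such that $T_3|_Q\notin\{T_1|_Q,T_2|_Q\}$, then $V_{T_3}\not\subseteq V_{T_1}\ast V_{T_2}$.
   Context: Trees are unrooted binary trees with leaves labelled bijectively by $[n]$; $T|_Q$ is the induced subtree on leaf set $Q$; $\Sigma(T)$ is the set of splits of $T$. With $G=\mathbb{Z}_2\times\mathbb{Z}_2$ and $A=(0,0)$, $C=(0,1)$, $G=(1,0)$, $T=(1,1)$, the K3P model on $T$ in Fourier coordinates $q_{g_1\cdots g_n}$ is $q_{g_1\cdots g_n}=\prod_{A|B\in\Sigma(T)}a^{A|B}_{\sum_{i\in A}g_i}$ if $\sum g_i=0$ and $0$ otherwise; K2P imposes $a^e_G=a^e_T$, JC imposes $a^e_C=a^e_G=a^e_T$ for all splits $e$. $V_T\subseteq\mathbb{P}^{4^n-1}$ is the Zariski closure of the image for complex parameters; $V\ast W$ is the join (Zariski closure of the union of all lines meeting $V$ and $W$). *)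

theory Defs
  imports Complex_Main
begin

text \<open>A tree is (V, E, lf): a finite vertex set V of naturals, a set E of
  2-element edges, and a leaf labelling lf mapping {1..n} bijectively onto
  the leaves (degree-1 vertices).\<close>

type_synonym tree = "nat set \<times> nat set set \<times> (nat \<Rightarrow> nat)"

definition adj :: "nat set set \<Rightarrow> (nat \<times> nat) set" where
  "adj E = {(u, v). {u, v} \<in> E}"

definition degree :: "nat set set \<Rightarrow> nat \<Rightarrow> nat" where
  "degree E v = card {e \<in> E. v \<in> e}"

definition bin_tree :: "nat \<Rightarrow> tree \<Rightarrow> bool" where
  "bin_tree n T \<longleftrightarrow> (case T of (V, E, lf) \<Rightarrow>
     finite V \<and> V \<noteq> {}
     \<and> (\<forall>e\<in>E. \<exists>u v. e = {u, v} \<and> u \<noteq> v \<and> u \<in> V \<and> v \<in> V)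
     \<and> (\<forall>u\<in>V. \<forall>v\<in>V. (u, v) \<in> (adj E)\<^sup>*)
     \<and> card E + 1 = card V
     \<and> (\<forall>v\<in>V. degree E v = 1 \<or> degree E v = 3)
     \<and> bij_betw lf {1..n} {v \<in> V. degree E v = 1})"

text \<open>Component of u after deleting edge e; the split of edge e = {u,v}.
  A split A|B is represented as the unordered pair {A, B}.\<close>

definition comp :: "nat set set \<Rightarrow> nat set \<Rightarrow> nat \<Rightarrow> nat set" where
  "comp E e u = {w. (u, w) \<in> (adj (E - {e}))\<^sup>*}"

definition splits :: "nat \<Rightarrow> tree \<Rightarrow> nat set set set" where
  "splits n T = (case T of (V, E, lf) \<Rightarrow>
     {{{i \<in> {1..n}. lf i \<in> comp E e u}, {i \<in> {1..n}. lf i \<in> comp E e v}} | e u v.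
        e \<in> E \<and> e = {u, v} \<and> u \<noteq> v})"

text \<open>Splits of the induced subtree T|_Q: nontrivial restrictions of splits of T.
  Two restricted trees are equal iff their split systems are equal.\<close>

definition restr_splits :: "nat set \<Rightarrow> nat set set set \<Rightarrow> nat set set set" where
  "restr_splits Q S = {{A \<inter> Q, B \<inter> Q} | A B.
      {A, B} \<in> S \<and> A \<inter> Q \<noteq> {} \<and> B \<inter> Q \<noteq> {}}"

type_synonym grp = "bool \<times> bool"

definition gA :: grp where "gA = (False, False)"
definition gC :: grp where "gC = (False, True)"
definition gG :: grp where "gG = (True, False)"
definition gT :: grp where "gT = (True, True)"

definition gadd :: "grp \<Rightarrow> grp \<Rightarrow> grp" where
  "gadd x y = (fst x \<noteq> fst y, snd x \<noteq> snd y)"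

text \<open>Sum of g_i over i in A (A a subset of [n]); g is a word of length n,
  g_i = g ! (i - 1).\<close>

definition gsum :: "grp list \<Rightarrow> nat set \<Rightarrow> grp" where
  "gsum g A = foldr gadd (map (\<lambda>i. g ! (i - 1)) (filter (\<lambda>i. i \<in> A) [1..<length g + 1])) gA"

datatype model = JC | K2P

definition valid_params :: "model \<Rightarrow> (nat set set \<Rightarrow> grp \<Rightarrow> complex) \<Rightarrow> bool" where
  "valid_params M a = (case M of
      JC \<Rightarrow> (\<forall>e. a e gC = a e gG \<and> a e gG = a e gT)
    | K2P \<Rightarrow> (\<forall>e. a e gG = a e gT))"

text \<open>Fourier coordinates q_{g_1...g_n}; coordinates are indexed by words of
  length n (entries at other words are 0). For a split s with sum g = 0 the
  sum over either side coincides, so any side may be chosen.\<close>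

definition param_point :: "nat \<Rightarrow> tree \<Rightarrow> (nat set set \<Rightarrow> grp \<Rightarrow> complex) \<Rightarrow> (grp list \<Rightarrow> complex)" where
  "param_point n T a = (\<lambda>g. if length g = n \<and> gsum g {1..n} = gA
      then (\<Prod>s\<in>splits n T. a s (gsum g (SOME A. A \<in> s))) else 0)"

inductive_set polyfun :: "(('i \<Rightarrow> complex) \<Rightarrow> complex) set" where
  pconst: "(\<lambda>x. c) \<in> polyfun"
| pvar: "(\<lambda>x. x i) \<in> polyfun"
| padd: "p \<in> polyfun \<Longrightarrow> q \<in> polyfun \<Longrightarrow> (\<lambda>x. p x + q x) \<in> polyfun"
| pmult: "p \<in> polyfun \<Longrightarrow> q \<in> polyfun \<Longrightarrow> (\<lambda>x. p x * q x) \<in> polyfun"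

definition zariski_closure :: "('i \<Rightarrow> complex) set \<Rightarrow> ('i \<Rightarrow> complex) set" where
  "zariski_closure S = {x. \<forall>p\<in>polyfun. (\<forall>y\<in>S. p y = 0) \<longrightarrow> p x = 0}"

text \<open>Affine cone over V_T.\<close>
definition variety :: "model \<Rightarrow> nat \<Rightarrow> tree \<Rightarrow> (grp list \<Rightarrow> complex) set" where
  "variety M n T = zariski_closure {param_point n T a | a. valid_params M a}"

text \<open>Affine cone over the join V * W, for affine cones V, W.\<close>
definition join :: "('i \<Rightarrow> complex) set \<Rightarrow> ('i \<Rightarrow> complex) set \<Rightarrow> ('i \<Rightarrow> complex) set" where
  "join V W = zariski_closure {(\<lambda>i. x i + y i) | x y. x \<in> V \<and> y \<in> W}"

end

theory Submission
  imports Defs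
begin

text \<open>Every binary tree restricts to \<open>Q\<close> as a resolved quartet: since splits of a tree are pairwise
  compatible, all edges separating \<open>Q\<close> into two pairs induce the same split \<open>t|Q-t\<close>, and a side
  carrying at least two leaves of \<open>Q\<close> that is minimal by inclusion carries exactly two.

  Evaluate the Fourier coordinates at the words that are \<open>A\<close> outside \<open>Q\<close> and \<open>G\<close> or \<open>T\<close> on \<open>Q\<close>,
  with \<open>T\<close> exactly on an even set \<open>C \<subseteq> Q\<close>. As \<open>a\<^sub>G = a\<^sub>T\<close> in both models, only splits with two
  leaves of \<open>Q\<close> on each side see \<open>C\<close>, and they pick up \<open>a\<^sub>C\<close> instead of \<open>a\<^sub>A\<close> exactly when \<open>C\<close> is a
  pair not compatible with \<open>t\<close>. So \<open>q\<^sub>\<emptyset> = q\<^sub>t\<close>, and the two other pairs give a common value. If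
  \<open>x\<close>, \<open>y\<close>, \<open>t\<^sub>3\<close> represent the three quartet splits, the linear form
  \<open>q\<^sub>\<emptyset> - q\<^sub>x - q\<^sub>y + q\<^sub>t\<^sub>3\<close> vanishes on \<open>V\<^sub>T\<^sub>1\<close> and \<open>V\<^sub>T\<^sub>2\<close>, whose quartets are \<open>x\<close> or \<open>y\<close>, hence on their join,
  but not on \<open>V\<^sub>T\<^sub>3\<close>: with \<open>a\<^sub>A = 2\<close> and all other parameters \<open>1\<close> it equals \<open>2 (q\<^sub>\<emptyset> - q\<^sub>x) \<noteq> 0\<close>.\<close>

section \<open>Connectivity of graphs\<close>

definition edges_within :: "nat set \<Rightarrow> nat set set \<Rightarrow> bool" where
  "edges_within V F \<longleftrightarrow> (\<forall>e\<in>F. \<exists>u v. e = {u, v} \<and> u \<noteq> v \<and> u \<in> V \<and> v \<in> V)"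

definition graph_connected :: "nat set \<Rightarrow> nat set set \<Rightarrow> bool" where
  "graph_connected V F \<longleftrightarrow> (\<forall>u\<in>V. \<forall>v\<in>V. (u, v) \<in> (adj F)\<^sup>*)"

abbreviation reach :: "nat set set \<Rightarrow> nat \<Rightarrow> nat set" where
  "reach F u \<equiv> {w. (u, w) \<in> (adj F)\<^sup>*}"

lemma adj_iff [simp]: "(u, v) \<in> adj F \<longleftrightarrow> {u, v} \<in> F"
  by (simp add: adj_def)

lemma rtrancl_adj_sym: "(u, v) \<in> (adj F)\<^sup>* \<Longrightarrow> (v, u) \<in> (adj F)\<^sup>*"
proof -
  have "sym (adj F)" by (auto intro: symI simp: insert_commute)
  then show "(u, v) \<in> (adj F)\<^sup>* \<Longrightarrow> (v, u) \<in> (adj F)\<^sup>*" by (meson sym_rtrancl symD)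
qed

lemma rtrancl_adj_common:
  "(u, w) \<in> (adj F)\<^sup>* \<Longrightarrow> (v, w) \<in> (adj F)\<^sup>* \<Longrightarrow> (u, v) \<in> (adj F)\<^sup>*"
  by (meson rtrancl_adj_sym rtrancl_trans)

lemma graph_connectedI:
  assumes "\<And>u. u \<in> V \<Longrightarrow> (a, u) \<in> (adj F)\<^sup>*"
  shows "graph_connected V F"
  using assms unfolding graph_connected_def by (meson rtrancl_adj_sym rtrancl_trans)

lemma rtrancl_adj_mono: "F \<subseteq> G \<Longrightarrow> (u, v) \<in> (adj F)\<^sup>* \<Longrightarrow> (u, v) \<in> (adj G)\<^sup>*"
  by (metis adj_iff rtrancl_mono subrelI subsetD)

lemma rtrancl_adj_Diff_edge:
  assumes "f = {a, b}" "(a, w) \<in> (adj F)\<^sup>*"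
  shows "(a, w) \<in> (adj (F - {f}))\<^sup>* \<or> (b, w) \<in> (adj (F - {f}))\<^sup>*"
  using assms(2)
proof (induction rule: rtrancl_induct)
  case (step y z)
  show ?case
  proof (cases "{y, z} = f")
    case True
    then show ?thesis using assms(1) by (auto simp: doubleton_eq_iff)
  next
    case False
    then show ?thesis using step by (meson DiffI adj_iff rtrancl_into_rtrancl singletonD)
  qed
qed simp

lemma rtrancl_adj_avoid:
  assumes "(u, w) \<in> (adj F)\<^sup>*" "\<And>z. z \<in> f \<Longrightarrow> (u, z) \<notin> (adj F)\<^sup>*"
  shows "(u, w) \<in> (adj (F - {f}))\<^sup>*"
  using assms(1)
proof (induction rule: rtrancl_induct)
  case (step y z)
  then have "{y, z} \<noteq> f" using assms(2) by blast
  then show ?case using step by (meson DiffI adj_iff rtrancl_into_rtrancl singletonD)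
qed simp

lemma edges_within_restrict: "edges_within V F \<Longrightarrow> edges_within W {g \<in> F. g \<subseteq> W}"
  unfolding edges_within_def by (metis (no_types, lifting) insert_subset mem_Collect_eq)

lemma reach_subset:
  assumes "edges_within V F" "u \<in> V"
  shows "reach F u \<subseteq> V"
proof
  fix w assume "w \<in> reach F u"
  then have "(u, w) \<in> (adj F)\<^sup>*" by simp
  then show "w \<in> V"
  proof (induction rule: rtrancl_induct)
    case (step y z)
    then show ?case using assms(1) unfolding edges_within_def by (fastforce simp: doubleton_eq_iff)
  qed (use assms(2) in simp)
qed

lemma graph_connected_reach:
  "graph_connected (reach F a) {g \<in> F. g \<subseteq> reach F a}"
proof -
  have "(a, w) \<in> (adj {g \<in> F. g \<subseteq> reach F a})\<^sup>*" if "w \<in> reach F a" for w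
    using that[simplified]
  proof (induction rule: rtrancl_induct)
    case (step y z)
    then have "{y, z} \<in> {g \<in> F. g \<subseteq> reach F a}" by (auto intro: rtrancl_into_rtrancl)
    then show ?case using step.IH by (meson adj_iff rtrancl_into_rtrancl)
  qed simp
  then show ?thesis by (rule graph_connectedI)
qed

lemma subset_reach_Diff_edge:
  assumes "graph_connected V F" "f = {a, b}" "a \<in> V"
  shows "V \<subseteq> reach (F - {f}) a \<union> reach (F - {f}) b"
  using assms rtrancl_adj_Diff_edge[OF assms(2)] by (auto simp: graph_connected_def)

lemma graph_connected_Diff_edge:
  assumes "graph_connected V F" "f = {a, b}" "a \<in> V" "(a, b) \<in> (adj (F - {f}))\<^sup>*"
  shows "graph_connected V (F - {f})"
proof (rule graph_connectedI)
  fix u assume "u \<in> V"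
  then show "(a, u) \<in> (adj (F - {f}))\<^sup>*"
    using subset_reach_Diff_edge[OF assms(1-3)] assms(4) by (auto intro: rtrancl_trans)
qed

lemma edges_split_reach:
  assumes "edges_within V G" "V \<subseteq> reach G a \<union> reach G b"
  shows "G = {g \<in> G. g \<subseteq> reach G a} \<union> {g \<in> G. g \<subseteq> reach G b}"
proof -
  have "g \<subseteq> reach G a \<or> g \<subseteq> reach G b" if g: "g \<in> G" for g
  proof -
    obtain p q where pq: "g = {p, q}" "p \<in> V" using assms(1) g by (auto simp: edges_within_def)
    then have "(p, q) \<in> adj G" using g by simp
    moreover have "p \<in> reach G a \<or> p \<in> reach G b" using pq(2) assms(2) by blast
    ultimately show ?thesis using pq(1) by (auto intro: rtrancl_into_rtrancl)
  qed
  then show ?thesis by blast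
qed

text \<open>Delete an edge: either the graph stays connected, or it falls apart into the components of
  the two endpoints, to which induction applies.\<close>

lemma card_vertices_le_Suc_card_edges:
  assumes "finite F" "edges_within V F" "graph_connected V F" "finite V" "V \<noteq> {}"
  shows "card V \<le> card F + 1"
  using assms
proof (induction "card F" arbitrary: F V rule: less_induct)
  case less
  show ?case
  proof (cases "F = {}")
    case True
    then have "\<forall>u\<in>V. \<forall>v\<in>V. u = v"
      using less.prems(3) by (auto simp: graph_connected_def adj_def elim: converse_rtranclE)
    then show ?thesis using True by (simp add: card_le_Suc0_iff_eq less.prems(4))
  next
    case False
    then obtain f where "f \<in> F" by auto
    then obtain a b where ab: "f = {a, b}" "a \<in> V" "b \<in> V"
      using less.prems(2) by (auto simp: edges_within_def)
    define F' where "F' = F - {f}"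
    have card_F': "card F = card F' + 1"
      using \<open>f \<in> F\<close> less.prems(1) card_Suc_Diff1 by (fastforce simp: F'_def)
    have IH: "card W \<le> card G + 1"
      if "G \<subseteq> F'" "edges_within W G" "graph_connected W G" "finite W" "W \<noteq> {}" for G W
    proof -
      have "finite G" using less.prems(1) that(1) F'_def finite_subset by blast
      moreover have "card G < card F"
        using card_F' card_mono[OF _ that(1)] less.prems(1) by (simp add: F'_def)
      ultimately show ?thesis using less.hyps that(2-5) by blast
    qed
    have within': "edges_within V F'" using less.prems(2) by (auto simp: edges_within_def F'_def)
    show ?thesis
    proof (cases "(a, b) \<in> (adj F')\<^sup>*")
      case True
      then have "graph_connected V F'"
        using graph_connected_Diff_edge[OF less.prems(3) ab(1,2)] by (simp add: F'_def)
      then show ?thesis using IH[OF order_refl within' _ less.prems(4,5)] card_F' by simp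
    next
      case False
      define F1 where "F1 = {g \<in> F'. g \<subseteq> reach F' a}"
      define F2 where "F2 = {g \<in> F'. g \<subseteq> reach F' b}"
      have disjoint: "reach F' a \<inter> reach F' b = {}"
        using False rtrancl_adj_common by blast
      have cover: "V \<subseteq> reach F' a \<union> reach F' b"
        using subset_reach_Diff_edge[OF less.prems(3) ab(1,2)] by (simp add: F'_def)
      then have V_eq: "V = reach F' a \<union> reach F' b"
        using reach_subset[OF within'] ab(2,3) by blast
      have F'_eq: "F' = F1 \<union> F2"
        unfolding F1_def F2_def by (rule edges_split_reach[OF within' cover])
      have "F1 \<inter> F2 = {}"
        using disjoint within' by (fastforce simp: F1_def F2_def edges_within_def)
      have finite_reach: "finite (reach F' a)" "finite (reach F' b)"
        using V_eq less.prems(4) by (metis finite_Un)+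
      have "card (reach F' a) \<le> card F1 + 1" "card (reach F' b) \<le> card F2 + 1"
        unfolding F1_def F2_def
        by (rule IH; auto simp: graph_connected_reach edges_within_restrict[OF within'] finite_reach)+
      moreover have "card V = card (reach F' a) + card (reach F' b)"
        using V_eq disjoint finite_reach by (simp add: card_Un_disjoint)
      moreover have "card F' = card F1 + card F2"
        using F'_eq \<open>F1 \<inter> F2 = {}\<close> less.prems(1)
        by (metis F'_def card_Un_disjoint finite_Diff finite_Un)
      ultimately show ?thesis using card_F' by linarith
    qed
  qed
qed

section \<open>Leaf-labelled binary trees\<close>

locale leaf_labelled_tree =
  fixes n :: nat and V :: "nat set" and E :: "nat set set" and lf :: "nat \<Rightarrow> nat"
  assumes bin_tree: "bin_tree n (V, E, lf)"
begin

lemma finite_vertices: "finite V"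
  and edges_within: "edges_within V E"
  and connected: "graph_connected V E"
  and card_edges: "card E + 1 = card V"
  and degree_cases: "v \<in> V \<Longrightarrow> degree E v = 1 \<or> degree E v = 3"
  and bij_betw_leaves: "bij_betw lf {1..n} {v \<in> V. degree E v = 1}"
  using bin_tree by (auto simp: bin_tree_def edges_within_def graph_connected_def)

lemma finite_edges: "finite E"
proof -
  have "E \<subseteq> Pow V" using edges_within by (auto simp: edges_within_def)
  then show ?thesis using finite_vertices finite_subset by blast
qed

lemma edge_vertices: "{u, v} \<in> E \<Longrightarrow> u \<in> V \<and> v \<in> V \<and> u \<noteq> v"
  using edges_within unfolding edges_within_def by (metis doubleton_eq_iff)

lemma edge_obtain:
  assumes "e \<in> E" "v \<in> e"
  obtains w where "e = {v, w}"
proof -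
  obtain a b where "e = {a, b}" using edges_within assms(1) by (auto simp: edges_within_def)
  then show ?thesis using that assms(2) by (auto simp: insert_commute)
qed

lemma leaf_label: "i \<in> {1..n} \<Longrightarrow> lf i \<in> V \<and> degree E (lf i) = 1"
  using bij_betw_leaves by (auto dest: bij_betwE)

lemma inj_on_leaf_labels: "inj_on lf {1..n}"
  using bij_betw_leaves bij_betw_imp_inj_on by blast

text \<open>Acyclicity: if the endpoints of an edge stayed connected after deleting it, the remaining
  connected graph would have \<open>card V - 2\<close> edges, too few.\<close>

lemma edge_separates:
  assumes "{u, v} \<in> E"
  shows "(u, v) \<notin> (adj (E - {{u, v}}))\<^sup>*"
proof
  assume "(u, v) \<in> (adj (E - {{u, v}}))\<^sup>*"
  then have "graph_connected V (E - {{u, v}})"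
    using graph_connected_Diff_edge[OF connected refl] edge_vertices[OF assms] by blast
  moreover have "edges_within V (E - {{u, v}})"
    using edges_within by (auto simp: edges_within_def)
  ultimately have "card V \<le> card (E - {{u, v}}) + 1"
    using finite_edges finite_vertices card_edges
    by (intro card_vertices_le_Suc_card_edges) auto
  then show False
    using card_Suc_Diff1[OF finite_edges assms] card_edges by simp
qed

lemma self_in_comp: "u \<in> comp E e u"
  by (simp add: comp_def)

lemma comp_step: "{y, z} \<in> E \<Longrightarrow> {y, z} \<noteq> e \<Longrightarrow> y \<in> comp E e u \<Longrightarrow> z \<in> comp E e u"
  unfolding comp_def by (auto intro: rtrancl_into_rtrancl)

lemma comp_subset_vertices: "u \<in> V \<Longrightarrow> comp E e u \<subseteq> V"
  using reach_subset[of V "E - {e}" u] edges_within by (auto simp: comp_def edges_within_def)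

lemma comp_cases:
  assumes "{u, v} \<in> E" "w \<in> V"
  shows "w \<in> comp E {u, v} u \<or> w \<in> comp E {u, v} v"
proof -
  have "(u, w) \<in> (adj E)\<^sup>*"
    using connected assms edge_vertices[OF assms(1)] by (simp add: graph_connected_def)
  then show ?thesis using rtrancl_adj_Diff_edge[OF refl] by (simp add: comp_def)
qed

lemma comp_disjoint:
  assumes "{u, v} \<in> E"
  shows "comp E {u, v} u \<inter> comp E {u, v} v = {}"
  unfolding comp_def using edge_separates[OF assms] rtrancl_adj_common by blast

lemma comp_subset_comp:
  assumes "comp E f y \<inter> e = {}" "y \<in> comp E e w"
  shows "comp E f y \<subseteq> comp E e w"
proof
  fix z assume "z \<in> comp E f y"
  then have "(y, z) \<in> (adj (E - {f} - {e}))\<^sup>*"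
    using assms(1) rtrancl_adj_avoid[of y z "E - {f}" e] by (auto simp: comp_def)
  then have "(y, z) \<in> (adj (E - {e}))\<^sup>*" by (rule rtrancl_adj_mono[rotated]) blast
  then show "z \<in> comp E e w" using assms(2) by (auto simp: comp_def)
qed

lemma comp_subset_side:
  assumes "{u, v} \<in> E" "{x, y} \<in> E" "{x, y} \<subseteq> comp E {u, v} v"
  shows "comp E {u, v} u \<subseteq> comp E {x, y} x \<or> comp E {u, v} u \<subseteq> comp E {x, y} y"
proof -
  have disjoint: "comp E {u, v} u \<inter> {x, y} = {}" using assms(3) comp_disjoint[OF assms(1)] by blast
  have "u \<in> comp E {x, y} x \<or> u \<in> comp E {x, y} y"
    using comp_cases[OF assms(2)] edge_vertices[OF assms(1)] by blast
  then show ?thesis using comp_subset_comp[OF disjoint] by blast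
qed

lemma edge_comps_nested:
  assumes "{u, v} \<in> E" "{x, y} \<in> E" "{u, v} \<noteq> {x, y}"
  shows "\<exists>C\<in>{comp E {u, v} u, comp E {u, v} v}. \<exists>D\<in>{comp E {x, y} x, comp E {x, y} y}. C \<subseteq> D"
proof -
  have same_side: "y \<in> comp E {u, v} w" if "x \<in> comp E {u, v} w" for w
    by (rule comp_step[OF assms(2)]) (use assms(3) that in auto)
  have "x \<in> comp E {u, v} u \<or> x \<in> comp E {u, v} v"
    using comp_cases[OF assms(1)] edge_vertices[OF assms(2)] by blast
  then show ?thesis
  proof
    assume "x \<in> comp E {u, v} u"
    then have "{x, y} \<subseteq> comp E {v, u} u" using same_side by (simp add: insert_commute)
    then have "comp E {v, u} v \<subseteq> comp E {x, y} x \<or> comp E {v, u} v \<subseteq> comp E {x, y} y"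
      using comp_subset_side[of v u x y] assms(1,2) by (simp add: insert_commute)
    then show ?thesis by (auto simp: insert_commute)
  next
    assume "x \<in> comp E {u, v} v"
    then have "{x, y} \<subseteq> comp E {u, v} v" using same_side by simp
    then show ?thesis using comp_subset_side[OF assms(1,2)] by blast
  qed
qed

lemma comp_leaf:
  assumes "{u, v} \<in> E" "degree E v = 1"
  shows "comp E {u, v} v = {v}"
proof -
  have "card {g \<in> E. v \<in> g} = 1" using assms(2) by (simp add: degree_def)
  then obtain g where g: "{g \<in> E. v \<in> g} = {g}" by (rule card_1_singletonE)
  have "{u, v} \<in> {g \<in> E. v \<in> g}" using assms(1) by simp
  then have incident: "{g \<in> E. v \<in> g} = {{u, v}}" using g by simp
  have "w = v" if "(v, w) \<in> (adj (E - {{u, v}}))\<^sup>*" for w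
    using that
  proof (cases rule: converse_rtranclE)
    case (step z)
    then have "{v, z} \<in> {g \<in> E. v \<in> g} - {{u, v}}" by simp
    then show ?thesis using incident by simp
  qed simp
  then show ?thesis by (auto simp: comp_def)
qed

lemma leaf_edge:
  assumes "i \<in> {1..n}"
  obtains v where "{v, lf i} \<in> E" "comp E {v, lf i} (lf i) = {lf i}"
proof -
  have leaf: "degree E (lf i) = 1" using leaf_label[OF assms] by blast
  then have "card {g \<in> E. lf i \<in> g} = 1" by (simp add: degree_def)
  then obtain g where "{g \<in> E. lf i \<in> g} = {g}" by (rule card_1_singletonE)
  then have "g \<in> E" "lf i \<in> g" by auto
  then obtain v where "g = {lf i, v}" by (rule edge_obtain)
  then have "{v, lf i} \<in> E" using \<open>g \<in> E\<close> by (simp add: insert_commute)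
  then show ?thesis using that comp_leaf[OF _ leaf] by blast
qed

lemma comp_cover:
  assumes "w \<in> comp E {u, v} v"
  shows "w = v \<or> (\<exists>x. {v, x} \<in> E \<and> {v, x} \<noteq> {u, v} \<and> w \<in> comp E {v, x} x)"
proof -
  have "(v, w) \<in> (adj (E - {{u, v}}))\<^sup>*" using assms by (simp add: comp_def)
  then show ?thesis
  proof (induction rule: rtrancl_induct)
    case (step y z)
    then have yz: "{y, z} \<in> E" "{y, z} \<noteq> {u, v}" by auto
    from step.IH show ?case
    proof
      assume "y = v"
      then show ?thesis using yz self_in_comp by blast
    next
      assume "\<exists>x. {v, x} \<in> E \<and> {v, x} \<noteq> {u, v} \<and> y \<in> comp E {v, x} x"
      then obtain x where x: "{v, x} \<in> E" "{v, x} \<noteq> {u, v}" "y \<in> comp E {v, x} x" by blast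
      show ?thesis
      proof (cases "{y, z} = {v, x}")
        case True
        then show ?thesis using x self_in_comp by (auto simp: doubleton_eq_iff)
      next
        case False
        then show ?thesis using comp_step[OF yz(1) False x(3)] x by blast
      qed
    qed
  qed simp
qed

lemma comp_child_psubset:
  assumes "{u, v} \<in> E" "{v, x} \<in> E" "{v, x} \<noteq> {u, v}"
  shows "comp E {v, x} x \<subset> comp E {u, v} v"
proof -
  have "u \<in> comp E {v, x} v" using comp_step[of v u] assms self_in_comp by (metis insert_commute)
  then have "comp E {v, x} x \<inter> {u, v} = {}"
    using comp_disjoint[OF assms(2)] self_in_comp by blast
  moreover have "x \<in> comp E {u, v} v" using comp_step[OF assms(2)] assms(3) self_in_comp by metis
  ultimately have "comp E {v, x} x \<subseteq> comp E {u, v} v" by (rule comp_subset_comp)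
  moreover have "v \<notin> comp E {v, x} x" using comp_disjoint[OF assms(2)] self_in_comp by blast
  ultimately show ?thesis using self_in_comp by blast
qed

lemma other_edges_degree_3:
  assumes "{u, v} \<in> E" "degree E v = 3"
  obtains x1 x2 where "{g \<in> E. v \<in> g} - {{u, v}} = {{v, x1}, {v, x2}}"
proof -
  have "card ({g \<in> E. v \<in> g} - {{u, v}}) = 2"
    using assms finite_edges by (simp add: degree_def)
  then obtain f1 f2 where f: "{g \<in> E. v \<in> g} - {{u, v}} = {f1, f2}" by (auto simp: card_2_iff)
  then obtain x1 x2 where "f1 = {v, x1}" "f2 = {v, x2}" by (metis (lifting) edge_obtain DiffD1 insertCI mem_Collect_eq)
  then show ?thesis using f that by blast
qed

lemma comp_subset_children:
  assumes "{u, v} \<in> E" "degree E v = 3"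
  obtains x1 x2 where "{v, x1} \<in> E" "{v, x1} \<noteq> {u, v}" "{v, x2} \<in> E" "{v, x2} \<noteq> {u, v}"
    "comp E {u, v} v \<subseteq> {v} \<union> comp E {v, x1} x1 \<union> comp E {v, x2} x2"
proof -
  obtain x1 x2 where others: "{g \<in> E. v \<in> g} - {{u, v}} = {{v, x1}, {v, x2}}"
    using other_edges_degree_3[OF assms] .
  have "comp E {u, v} v \<subseteq> {v} \<union> comp E {v, x1} x1 \<union> comp E {v, x2} x2"
  proof
    fix z assume "z \<in> comp E {u, v} v"
    then have "z = v \<or> (\<exists>x. {v, x} \<in> E \<and> {v, x} \<noteq> {u, v} \<and> z \<in> comp E {v, x} x)"
      by (rule comp_cover)
    then show "z \<in> {v} \<union> comp E {v, x1} x1 \<union> comp E {v, x2} x2"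
    proof
      assume "\<exists>x. {v, x} \<in> E \<and> {v, x} \<noteq> {u, v} \<and> z \<in> comp E {v, x} x"
      then obtain x where x: "{v, x} \<in> E" "{v, x} \<noteq> {u, v}" "z \<in> comp E {v, x} x" by blast
      then have "{v, x} \<in> {{v, x1}, {v, x2}}" unfolding others[symmetric] by simp
      then have "x = x1 \<or> x = x2" by (auto simp: doubleton_eq_iff)
      then show ?thesis using x(3) by blast
    qed simp
  qed
  moreover have "{v, x1} \<in> E" "{v, x1} \<noteq> {u, v}" "{v, x2} \<in> E" "{v, x2} \<noteq> {u, v}"
    using others by blast+
  ultimately show ?thesis using that by blast
qed

end

section \<open>Splits of a four-element set\<close>

definition pair_split :: "nat set \<Rightarrow> nat set \<Rightarrow> nat set set" where
  "pair_split Q X = {X, Q - X}"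

definition quartet_splits :: "nat set \<Rightarrow> nat set \<Rightarrow> nat set set set" where
  "quartet_splits Q t = insert (pair_split Q t) {pair_split Q {q} | q. q \<in> Q}"

lemma restr_splitsI: "{A, B} \<in> S \<Longrightarrow> A \<inter> Q \<noteq> {} \<Longrightarrow> B \<inter> Q \<noteq> {} \<Longrightarrow> {A \<inter> Q, B \<inter> Q} \<in> restr_splits Q S"
  unfolding restr_splits_def by blast

lemma pair_split_Diff: "X \<subseteq> Q \<Longrightarrow> pair_split Q (Q - X) = pair_split Q X"
  by (auto simp: pair_split_def double_diff)

lemma pair_split_eq_iff:
  assumes "X \<subseteq> Q" "Y \<subseteq> Q"
  shows "pair_split Q X = pair_split Q Y \<longleftrightarrow> Y = X \<or> Y = Q - X"
  using assms by (auto simp: pair_split_def doubleton_eq_iff)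

lemma quartet_splits_cong:
  "t \<subseteq> Q \<Longrightarrow> pair_split Q t = pair_split Q t' \<Longrightarrow> quartet_splits Q t = quartet_splits Q t'"
  by (simp add: quartet_splits_def)

context
  fixes Q :: "nat set"
  assumes card_Q: "card Q = 4"
begin

lemma finite_Q: "finite Q"
  using card_Q card.infinite by fastforce

lemma card_Diff_pair: "X \<subseteq> Q \<Longrightarrow> card (Q - X) = 4 - card X"
  using card_Q finite_Q by (simp add: card_Diff_subset finite_subset)

lemma pair_split_mem_quartet_splits:
  assumes "X \<subseteq> Q" "X \<noteq> {}" "X \<noteq> Q"
    and "card X = 2 \<Longrightarrow> pair_split Q X = pair_split Q t"
  shows "pair_split Q X \<in> quartet_splits Q t"
proof -
  have "finite X" using assms(1) finite_Q finite_subset by blast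
  then have "card X \<noteq> 0" using assms(2) by simp
  moreover have "card X \<le> 4" using card_mono[OF finite_Q assms(1)] card_Q by simp
  moreover have "card X \<noteq> 4" using card_subset_eq[OF finite_Q assms(1)] card_Q assms(3) by auto
  ultimately have "card X = 1 \<or> card X = 2 \<or> card X = 3" by linarith
  then consider "card X = 1" | "card X = 2" | "card X = 3" by blast
  then show ?thesis
  proof cases
    case 1
    then show ?thesis using assms(1) by (auto simp: quartet_splits_def card_1_singleton_iff)
  next
    case 2
    then show ?thesis using assms(4) by (simp add: quartet_splits_def)
  next
    case 3
    then obtain q where "Q - X = {q}" using card_Diff_pair[OF assms(1)] by (auto simp: card_1_singleton_iff)
    then have "pair_split Q X = pair_split Q {q}" using pair_split_Diff[OF assms(1)] by metis
    then show ?thesis using \<open>Q - X = {q}\<close> by (auto simp: quartet_splits_def)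
  qed
qed

lemma odd_card_Int_iff:
  assumes "X \<subseteq> Q" "C \<subseteq> Q" "even (card X)" "even (card C)"
  shows "odd (card (X \<inter> C)) \<longleftrightarrow> card X = 2 \<and> card C = 2 \<and> pair_split Q C \<noteq> pair_split Q X"
proof -
  have finite: "finite X" "finite C" using assms(1,2) finite_Q finite_subset by blast+
  have le4: "card X \<le> 4" "card C \<le> 4" using card_mono[OF finite_Q] assms(1,2) card_Q by auto
  have full: "Y = Q" if "Y \<subseteq> Q" "card Y = 4" for Y
    using card_subset_eq[OF finite_Q] that card_Q by simp
  have "card X = 0 \<or> card X = 2 \<or> card X = 4" "card C = 0 \<or> card C = 2 \<or> card C = 4"
    using assms(3,4) le4 by presburger+
  then consider "card X = 0" | "card X = 4" | "card C = 0" | "card C = 4" | "card X = 2" "card C = 2"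
    by metis
  then show ?thesis
  proof cases
    case 5
    have "card (X \<inter> C) = 1" if "C \<noteq> X" "C \<noteq> Q - X"
    proof -
      have "card (X \<inter> C) \<noteq> 2"
        using that 5 finite card_subset_eq[of X "X \<inter> C"] card_subset_eq[of C "X \<inter> C"] by auto
      moreover have "card (X \<inter> C) \<noteq> 0"
      proof
        assume "card (X \<inter> C) = 0"
        then have "C \<subseteq> Q - X" using finite assms(2) by auto
        then show False
          using that 5 card_Diff_pair[OF assms(1)] card_subset_eq[of "Q - X" C] finite_Q by auto
      qed
      moreover have "card (X \<inter> C) \<le> 2" using 5 card_mono[OF finite(1), of "X \<inter> C"] by auto
      ultimately show ?thesis by linarith
    qed
    moreover have "card (X \<inter> C) \<in> {0, 2}" if "C = X \<or> C = Q - X"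
      using that 5 by (auto simp: Int_Diff)
    moreover have "pair_split Q C \<noteq> pair_split Q X \<longleftrightarrow> \<not> (C = X \<or> C = Q - X)"
      using pair_split_eq_iff[OF assms(1,2)] by metis
    ultimately show ?thesis using 5 by (cases "C = X \<or> C = Q - X") auto
  qed (use assms finite full[of X] full[of C] in \<open>auto simp: Int_absorb1 Int_absorb2\<close>)
qed

lemma other_pair_splits:
  assumes "p \<subseteq> Q" "card p = 2"
  obtains x y where "x \<subseteq> Q" "y \<subseteq> Q" "card x = 2" "card y = 2"
    "pair_split Q x \<noteq> pair_split Q y" "pair_split Q p \<notin> {pair_split Q x, pair_split Q y}"
    "\<And>t. t \<subseteq> Q \<Longrightarrow> card t = 2 \<Longrightarrow> pair_split Q t \<in> {pair_split Q x, pair_split Q y, pair_split Q p}"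
proof -
  obtain a b where ab: "p = {a, b}" "a \<noteq> b" using assms(2) unfolding card_2_iff by blast
  have "card (Q - p) = 2" using card_Diff_pair[OF assms(1)] assms(2) by simp
  then obtain c d where cd: "Q - p = {c, d}" "c \<noteq> d" unfolding card_2_iff by blast
  have "Q = p \<union> (Q - p)" using assms(1) by blast
  also have "\<dots> = {a, b, c, d}" by (subst cd(1)) (auto simp: ab(1))
  finally have Q: "Q = {a, b, c, d}" .
  have distinct: "a \<noteq> c" "a \<noteq> d" "b \<noteq> c" "b \<noteq> d" using ab(1) cd(1) by blast+
  have through_a: "t \<in> {p, {a, c}, {a, d}}" if t: "t \<subseteq> Q" "card t = 2" "a \<in> t" for t
  proof -
    obtain z where "t = {a, z}" "z \<noteq> a"
      using t(2,3) unfolding card_2_iff by (metis insert_commute insertE singletonD)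
    then show ?thesis using t(1) Q ab(1) by auto
  qed
  have cover: "pair_split Q t \<in> {pair_split Q {a, c}, pair_split Q {a, d}, pair_split Q p}"
    if t: "t \<subseteq> Q" "card t = 2" for t
  proof (cases "a \<in> t")
    case True
    then show ?thesis using through_a[OF t] by auto
  next
    case False
    then have "Q - t \<in> {p, {a, c}, {a, d}}"
      using through_a[of "Q - t"] t card_Diff_pair[OF t(1)] Q by auto
    then show ?thesis using pair_split_Diff[OF t(1)] by auto
  qed
  show ?thesis
  proof (rule that[of "{a, c}" "{a, d}"])
    show "{a, c} \<subseteq> Q" "{a, d} \<subseteq> Q" using Q by simp_all
    show "card {a, c} = 2" "card {a, d} = 2" using distinct by simp_all
    show "pair_split Q {a, c} \<noteq> pair_split Q {a, d}"
      "pair_split Q p \<notin> {pair_split Q {a, c}, pair_split Q {a, d}}"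
      using ab distinct cd(2) by (auto simp: pair_split_def doubleton_eq_iff)
  qed (fact cover)
qed

end

section \<open>Restriction of a tree to four leaves\<close>

context leaf_labelled_tree
begin

definition leaf_side :: "nat set \<Rightarrow> nat \<Rightarrow> nat set" where
  "leaf_side e w = {i \<in> {1..n}. lf i \<in> comp E e w}"

lemma splits_eq: "splits n (V, E, lf) = {{leaf_side {u, v} u, leaf_side {u, v} v} | u v. {u, v} \<in> E}"
proof -
  have "splits n (V, E, lf) = {{leaf_side e u, leaf_side e v} | e u v. e \<in> E \<and> e = {u, v} \<and> u \<noteq> v}"
    by (simp add: splits_def leaf_side_def)
  also have "\<dots> = {{leaf_side {u, v} u, leaf_side {u, v} v} | u v. {u, v} \<in> E}"
    using edge_vertices by blast
  finally show ?thesis .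
qed

lemma finite_splits: "finite (splits n (V, E, lf))"
proof -
  have "splits n (V, E, lf) \<subseteq> (\<lambda>(u, v). {leaf_side {u, v} u, leaf_side {u, v} v}) ` (V \<times> V)"
    using edge_vertices by (auto simp: splits_eq)
  then show ?thesis using finite_vertices finite_subset by blast
qed

end

locale quartet_tree = leaf_labelled_tree +
  fixes Q :: "nat set"
  assumes quartet_subset: "Q \<subseteq> {1..n}" and card_quartet: "card Q = 4"
begin

definition quartet_leaves :: "nat set \<Rightarrow> nat set" where
  "quartet_leaves C = {i \<in> Q. lf i \<in> C}"

lemma finite_quartet: "finite Q"
  using card_quartet card.infinite by fastforce

lemma quartet_leaves_subset: "quartet_leaves C \<subseteq> Q"
  by (auto simp: quartet_leaves_def)

lemma quartet_leaves_subset_mono: "C \<subseteq> D \<Longrightarrow> quartet_leaves C \<subseteq> quartet_leaves D"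
  by (auto simp: quartet_leaves_def)

lemma card_quartet_leaves_mono: "C \<subseteq> D \<Longrightarrow> card (quartet_leaves C) \<le> card (quartet_leaves D)"
  using finite_quartet by (intro card_mono) (auto simp: quartet_leaves_def)

lemma quartet_leaves_Un: "quartet_leaves (C \<union> D) = quartet_leaves C \<union> quartet_leaves D"
  by (auto simp: quartet_leaves_def)

lemma leaf_side_Int_quartet: "leaf_side e w \<inter> Q = quartet_leaves (comp E e w)"
  using quartet_subset by (auto simp: leaf_side_def quartet_leaves_def)

lemma quartet_leaves_other_side:
  assumes "{u, v} \<in> E"
  shows "quartet_leaves (comp E {u, v} v) = Q - quartet_leaves (comp E {u, v} u)"
  using comp_cases[OF assms] comp_disjoint[OF assms] leaf_label quartet_subset
  unfolding quartet_leaves_def by blast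

lemma quartet_leaves_leaf: "i \<in> Q \<Longrightarrow> quartet_leaves {lf i} = {i}"
  using inj_on_leaf_labels quartet_subset by (auto simp: quartet_leaves_def dest: inj_onD)

lemma card_quartet_leaves_singleton: "card (quartet_leaves {v}) \<le> 1"
proof (cases "quartet_leaves {v} = {}")
  case False
  then obtain i where "i \<in> Q" "lf i = v" by (auto simp: quartet_leaves_def)
  then show ?thesis using quartet_leaves_leaf by auto
qed simp

lemma quartet_leaves_non_leaf: "degree E v \<noteq> 1 \<Longrightarrow> quartet_leaves {v} = {}"
  using leaf_label quartet_subset by (auto simp: quartet_leaves_def)

text \<open>A side with at least two quartet leaves that is minimal by inclusion has exactly two:
  each of the at most two smaller sides hanging off its root carries at most one.\<close>

lemma ex_edge_quartet_pair: "\<exists>u v. {u, v} \<in> E \<and> card (quartet_leaves (comp E {u, v} v)) = 2"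
proof -
  define P where "P = (\<lambda>(u, v). {u, v} \<in> E \<and> 2 \<le> card (quartet_leaves (comp E {u, v} v)))"
  define size where "size = (\<lambda>(u, v). card (comp E {u, v} v))"
  obtain q where "q \<in> Q" using card_quartet by fastforce
  then obtain w where w: "{w, lf q} \<in> E" "comp E {w, lf q} (lf q) = {lf q}"
    using leaf_edge quartet_subset by blast
  have "quartet_leaves (comp E {lf q, w} w) = Q - {q}"
    using quartet_leaves_other_side[of "lf q" w] w quartet_leaves_leaf[OF \<open>q \<in> Q\<close>]
    by (simp add: insert_commute)
  then have "P (lf q, w)"
    using w(1) \<open>q \<in> Q\<close> card_quartet finite_quartet by (simp add: P_def insert_commute)
  then obtain u v where P_uv: "P (u, v)" and minimal: "\<And>t. P t \<Longrightarrow> size (u, v) \<le> size t"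
    using ex_has_least_nat[of P _ size] by (metis surj_pair)
  then have edge: "{u, v} \<in> E" and two_le: "2 \<le> card (quartet_leaves (comp E {u, v} v))"
    by (auto simp: P_def)
  have child: "card (quartet_leaves (comp E {v, x} x)) \<le> 1" if "{v, x} \<in> E" "{v, x} \<noteq> {u, v}" for x
  proof -
    have "comp E {v, x} x \<subset> comp E {u, v} v" by (rule comp_child_psubset[OF edge that])
    moreover have "finite (comp E {u, v} v)"
      using comp_subset_vertices edge_vertices[OF edge] finite_vertices finite_subset by blast
    ultimately have "size (v, x) < size (u, v)" by (simp add: size_def psubset_card_mono)
    then have "\<not> P (v, x)" using minimal leD by blast
    then show ?thesis using that by (simp add: P_def)
  qed
  have "degree E v = 1 \<or> degree E v = 3" using degree_cases edge_vertices[OF edge] by blast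
  then show ?thesis
  proof
    assume "degree E v = 1"
    then show ?thesis using comp_leaf[OF edge] card_quartet_leaves_singleton[of v] two_le by simp
  next
    assume "degree E v = 3"
    then obtain x1 x2 where children: "{v, x1} \<in> E" "{v, x1} \<noteq> {u, v}" "{v, x2} \<in> E" "{v, x2} \<noteq> {u, v}"
      "comp E {u, v} v \<subseteq> {v} \<union> comp E {v, x1} x1 \<union> comp E {v, x2} x2"
      by (rule comp_subset_children[OF edge])
    from children(5) have "card (quartet_leaves (comp E {u, v} v))
        \<le> card (quartet_leaves {v} \<union> quartet_leaves (comp E {v, x1} x1) \<union> quartet_leaves (comp E {v, x2} x2))"
      by (metis card_quartet_leaves_mono quartet_leaves_Un)
    also have "\<dots> \<le> card (quartet_leaves {v}) + card (quartet_leaves (comp E {v, x1} x1))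
        + card (quartet_leaves (comp E {v, x2} x2))"
      by (meson card_Un_le add_right_mono le_trans)
    also have "\<dots> \<le> 0 + 1 + 1"
      using child[OF children(1,2)] child[OF children(3,4)] quartet_leaves_non_leaf[of v]
        \<open>degree E v = 3\<close> by simp
    finally show ?thesis using two_le edge by (metis le_antisym one_add_one add_0)
  qed
qed

end

context quartet_tree
begin

abbreviation tree_splits :: "nat set set set" where
  "tree_splits \<equiv> splits n (V, E, lf)"

lemma mem_splitE:
  assumes "s \<in> tree_splits" "A \<in> s"
  obtains u v where "{u, v} \<in> E" "s = {leaf_side {u, v} u, leaf_side {u, v} v}" "A = leaf_side {u, v} v"
proof -
  obtain u v where uv: "{u, v} \<in> E" "s = {leaf_side {u, v} u, leaf_side {u, v} v}"
    using assms(1) by (auto simp: splits_eq)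
  show ?thesis
  proof (cases "A = leaf_side {u, v} v")
    case True
    then show ?thesis using that uv by blast
  next
    case False
    then have "A = leaf_side {v, u} u" using assms(2) uv(2) by (simp add: insert_commute)
    moreover have "{v, u} \<in> E" "s = {leaf_side {v, u} v, leaf_side {v, u} u}"
      using uv by (simp_all add: insert_commute)
    ultimately show ?thesis using that by blast
  qed
qed

lemma quartet_leaves_sides:
  assumes "{u, v} \<in> E" "w \<in> {u, v}"
  shows "quartet_leaves (comp E {u, v} w) \<in> pair_split Q (quartet_leaves (comp E {u, v} v))"
proof -
  have "quartet_leaves (comp E {v, u} u) = Q - quartet_leaves (comp E {v, u} v)"
    using quartet_leaves_other_side[of v u] assms(1) by (simp add: insert_commute)
  then show ?thesis using assms(2) by (auto simp: pair_split_def insert_commute)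
qed

definition quartet_pair :: "nat set" where
  "quartet_pair = (SOME t. \<exists>u v. {u, v} \<in> E \<and> t = quartet_leaves (comp E {u, v} v) \<and> card t = 2)"

lemma quartet_pair_edge:
  obtains u v where "{u, v} \<in> E" "quartet_pair = quartet_leaves (comp E {u, v} v)"
    "card quartet_pair = 2"
proof -
  have "\<exists>t u v. {u, v} \<in> E \<and> t = quartet_leaves (comp E {u, v} v) \<and> card t = 2"
    using ex_edge_quartet_pair by blast
  then have "\<exists>u v. {u, v} \<in> E \<and> quartet_pair = quartet_leaves (comp E {u, v} v) \<and> card quartet_pair = 2"
    unfolding quartet_pair_def by (rule someI_ex)
  then show ?thesis using that by blast
qed

lemma quartet_pair_subset: "quartet_pair \<subseteq> Q"
  and card_quartet_pair: "card quartet_pair = 2"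
  using quartet_pair_edge quartet_leaves_subset by metis+

text \<open>Of two distinct edges, a side of one lies in a side of the other; for edges inducing 2|2 splits
  of \<open>Q\<close> these nested sides have traces of size 2 on \<open>Q\<close>, hence equal traces.\<close>

lemma pair_split_side:
  assumes "{u, v} \<in> E" "card (quartet_leaves (comp E {u, v} v)) = 2"
  shows "pair_split Q (quartet_leaves (comp E {u, v} v)) = pair_split Q quartet_pair"
proof -
  obtain a b where ab: "{a, b} \<in> E" "quartet_pair = quartet_leaves (comp E {a, b} b)"
    by (rule quartet_pair_edge)
  have card_side: "card (quartet_leaves (comp E {x, y} z)) = 2"
    if "{x, y} \<in> E" "z \<in> {x, y}" "card (quartet_leaves (comp E {x, y} y)) = 2" for x y z
    using quartet_leaves_sides[OF that(1,2)] that(3) card_Diff_pair[OF card_quartet quartet_leaves_subset]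
    by (auto simp: pair_split_def)
  have pair_split_eq: "pair_split Q (quartet_leaves (comp E {x, y} z)) = pair_split Q (quartet_leaves (comp E {x, y} y))"
    if "{x, y} \<in> E" "z \<in> {x, y}" for x y z
    using quartet_leaves_sides[OF that] pair_split_Diff[OF quartet_leaves_subset]
    by (auto simp: pair_split_def)
  show ?thesis
  proof (cases "{a, b} = {u, v}")
    case True
    then show ?thesis using ab pair_split_eq[OF assms(1), of b] by auto
  next
    case False
    then obtain w z where wz: "w \<in> {a, b}" "z \<in> {u, v}" "comp E {a, b} w \<subseteq> comp E {u, v} z"
      using edge_comps_nested[OF ab(1) assms(1)] by blast
    have "quartet_leaves (comp E {a, b} w) = quartet_leaves (comp E {u, v} z)"
    proof (rule card_subset_eq)
      show "finite (quartet_leaves (comp E {u, v} z))"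
        using finite_quartet quartet_leaves_subset finite_subset by blast
      show "quartet_leaves (comp E {a, b} w) \<subseteq> quartet_leaves (comp E {u, v} z)"
        using wz(3) by (rule quartet_leaves_subset_mono)
      show "card (quartet_leaves (comp E {a, b} w)) = card (quartet_leaves (comp E {u, v} z))"
        using card_side[OF ab(1) wz(1)] card_side[OF assms(1) wz(2) assms(2)] ab(2) card_quartet_pair
        by simp
    qed
    then show ?thesis
      using pair_split_eq[OF ab(1) wz(1)] pair_split_eq[OF assms(1) wz(2)] ab(2) by simp
  qed
qed

lemma pair_split_mem_restr_splits:
  assumes "{u, v} \<in> E" "quartet_leaves (comp E {u, v} v) \<noteq> {}" "quartet_leaves (comp E {u, v} v) \<noteq> Q"
  shows "pair_split Q (quartet_leaves (comp E {u, v} v)) \<in> restr_splits Q tree_splits"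
proof -
  let ?X = "quartet_leaves (comp E {u, v} v)"
  have u_side: "leaf_side {u, v} u \<inter> Q = Q - ?X"
    using quartet_leaves_other_side[of v u] assms(1) by (simp add: insert_commute leaf_side_Int_quartet)
  have v_side: "leaf_side {u, v} v \<inter> Q = ?X" by (simp add: leaf_side_Int_quartet)
  have "{leaf_side {u, v} v, leaf_side {u, v} u} \<in> tree_splits"
    using assms(1) by (auto simp: splits_eq insert_commute)
  moreover have "Q - ?X \<noteq> {}" using assms(3) quartet_leaves_subset by blast
  ultimately have "{leaf_side {u, v} v \<inter> Q, leaf_side {u, v} u \<inter> Q} \<in> restr_splits Q tree_splits"
    using assms(2) u_side v_side by (intro restr_splitsI) simp_all
  then show ?thesis using u_side v_side by (simp add: pair_split_def)
qed

lemma restr_splitsE: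
  assumes "P \<in> restr_splits Q tree_splits"
  obtains u v where "{u, v} \<in> E" "quartet_leaves (comp E {u, v} v) \<noteq> {}"
    "quartet_leaves (comp E {u, v} v) \<noteq> Q" "P = pair_split Q (quartet_leaves (comp E {u, v} v))"
proof -
  obtain A B where AB: "P = {A \<inter> Q, B \<inter> Q}" "{A, B} \<in> tree_splits" "A \<inter> Q \<noteq> {}" "B \<inter> Q \<noteq> {}"
    using assms unfolding restr_splits_def by blast
  obtain u v where uv: "{u, v} \<in> E" "{A, B} = {leaf_side {u, v} u, leaf_side {u, v} v}"
    "B = leaf_side {u, v} v"
    using mem_splitE[OF AB(2), of B] by blast
  have other_side: "leaf_side {u, v} v \<inter> Q = Q - leaf_side {u, v} u \<inter> Q"
    using quartet_leaves_other_side[OF uv(1)] by (simp add: leaf_side_Int_quartet)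
  have "A = leaf_side {u, v} u"
  proof (rule ccontr)
    assume "A \<noteq> leaf_side {u, v} u"
    then have "leaf_side {u, v} u = leaf_side {u, v} v" using uv(2,3) by (auto simp: doubleton_eq_iff)
    then show False using other_side AB(4) uv(3) by auto
  qed
  then have "A \<inter> Q = Q - B \<inter> Q"
    using other_side uv(3) quartet_leaves_subset by (auto simp: leaf_side_Int_quartet)
  then have "P = pair_split Q (quartet_leaves (comp E {u, v} v))"
    using AB(1) uv(3) by (simp add: pair_split_def leaf_side_Int_quartet insert_commute)
  moreover have "quartet_leaves (comp E {u, v} v) \<noteq> Q"
    using \<open>A \<inter> Q = Q - B \<inter> Q\<close> AB(3) uv(3) by (auto simp: leaf_side_Int_quartet)
  ultimately show ?thesis using that uv(1) AB(4) uv(3) by (simp add: leaf_side_Int_quartet)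
qed

theorem restr_splits_eq_quartet_splits:
  "restr_splits Q tree_splits = quartet_splits Q quartet_pair"
proof
  show "restr_splits Q tree_splits \<subseteq> quartet_splits Q quartet_pair"
  proof
    fix P assume "P \<in> restr_splits Q tree_splits"
    then obtain u v where uv: "{u, v} \<in> E" "quartet_leaves (comp E {u, v} v) \<noteq> {}"
      "quartet_leaves (comp E {u, v} v) \<noteq> Q" "P = pair_split Q (quartet_leaves (comp E {u, v} v))"
      by (rule restr_splitsE)
    then show "P \<in> quartet_splits Q quartet_pair"
      using pair_split_mem_quartet_splits[OF card_quartet quartet_leaves_subset] pair_split_side
      by simp
  qed
next
  have "pair_split Q quartet_pair \<in> restr_splits Q tree_splits"
  proof -
    obtain u v where "{u, v} \<in> E" "quartet_pair = quartet_leaves (comp E {u, v} v)"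
      by (rule quartet_pair_edge)
    moreover have "quartet_pair \<noteq> {}" "quartet_pair \<noteq> Q"
      using card_quartet_pair card_quartet by auto
    ultimately show ?thesis using pair_split_mem_restr_splits by simp
  qed
  moreover have "pair_split Q {q} \<in> restr_splits Q tree_splits" if q: "q \<in> Q" for q
  proof -
    obtain w where w: "{w, lf q} \<in> E" "comp E {w, lf q} (lf q) = {lf q}"
      using leaf_edge quartet_subset q by blast
    moreover have "{q} \<noteq> Q" using card_quartet by auto
    ultimately show ?thesis using pair_split_mem_restr_splits[of w "lf q"] quartet_leaves_leaf[OF q] by simp
  qed
  ultimately show "quartet_splits Q quartet_pair \<subseteq> restr_splits Q tree_splits"
    by (auto simp: quartet_splits_def)
qed

end

section \<open>Fourier coordinates on quartet words\<close>

definition quartet_word :: "nat \<Rightarrow> nat set \<Rightarrow> nat set \<Rightarrow> grp list" where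
  "quartet_word n Q C = map (\<lambda>i. if i \<in> Q then (True, i \<in> C) else gA) [1..<n + 1]"

lemma foldr_gadd: "foldr gadd xs gA = (odd (length (filter fst xs)), odd (length (filter snd xs)))"
  by (induction xs) (auto simp: gadd_def gA_def)

lemma length_filter_upt: "length (filter P [1..<n + 1]) = card {i \<in> {1..n}. P i}"
proof -
  have "length (filter P [1..<n + 1]) = card ({i. P i} \<inter> set [1..<n + 1])"
    by (rule distinct_length_filter) simp
  also have "{i. P i} \<inter> set [1..<n + 1] = {i \<in> {1..n}. P i}" by auto
  finally show ?thesis .
qed

lemma gsum_quartet_word:
  assumes "Q \<subseteq> {1..n}"
  shows "gsum (quartet_word n Q C) A = (odd (card (A \<inter> Q)), odd (card (A \<inter> Q \<inter> C)))"
proof -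
  let ?letter = "\<lambda>i. if i \<in> Q then (True, i \<in> C) else gA"
  let ?support = "filter (\<lambda>i. i \<in> A) [1..<n + 1]"
  have letters: "map (\<lambda>i. quartet_word n Q C ! (i - 1)) ?support = map ?letter ?support"
  proof (rule map_cong[OF refl])
    fix i assume "i \<in> set ?support"
    then have "i - 1 < length [1..<n + 1]" "[1..<n + 1] ! (i - 1) = i"
      by (auto simp: nth_upt simp del: upt_Suc)
    then show "quartet_word n Q C ! (i - 1) = ?letter i" unfolding quartet_word_def nth_map by simp
  qed
  have length: "length (quartet_word n Q C) = n" by (simp add: quartet_word_def)
  have "gsum (quartet_word n Q C) A = foldr gadd (map ?letter ?support) gA"
    unfolding gsum_def length letters ..
  moreover have "length (filter fst (map ?letter ?support)) = card (A \<inter> Q)"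
  proof -
    have "length (filter fst (map ?letter ?support)) = length (filter (\<lambda>i. i \<in> A \<inter> Q) [1..<n + 1])"
      unfolding filter_map filter_filter o_def length_map
      by (intro arg_cong[where f = length] filter_cong) (auto simp: gA_def)
    also have "\<dots> = card (A \<inter> Q)"
      unfolding length_filter_upt using assms by (intro arg_cong[where f = card]) auto
    finally show ?thesis .
  qed
  moreover have "length (filter snd (map ?letter ?support)) = card (A \<inter> Q \<inter> C)"
  proof -
    have "length (filter snd (map ?letter ?support)) = length (filter (\<lambda>i. i \<in> A \<inter> Q \<inter> C) [1..<n + 1])"
      unfolding filter_map filter_filter o_def length_map
      by (intro arg_cong[where f = length] filter_cong) (auto simp: gA_def)
    also have "\<dots> = card (A \<inter> Q \<inter> C)"
      unfolding length_filter_upt using assms by (intro arg_cong[where f = card]) auto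
    finally show ?thesis .
  qed
  ultimately show ?thesis by (simp add: foldr_gadd)
qed

text \<open>\<open>param_point\<close> evaluates each split at an arbitrary side; on a quartet word only the
  trace of that side on \<open>Q\<close> matters.\<close>

definition quartet_side :: "nat set \<Rightarrow> nat set set \<Rightarrow> nat set" where
  "quartet_side Q s = (SOME A. A \<in> s) \<inter> Q"

definition quartet_factor ::
    "nat set \<Rightarrow> (nat set set \<Rightarrow> grp \<Rightarrow> complex) \<Rightarrow> nat set set \<Rightarrow> bool \<Rightarrow> complex" where
  "quartet_factor Q a s off =
    (if odd (card (quartet_side Q s)) then a s gG
     else if off \<and> card (quartet_side Q s) = 2 then a s gC else a s gA)"

definition witness_params :: "nat set set \<Rightarrow> grp \<Rightarrow> complex" where
  "witness_params s g = (if g = gA then 2 else 1)"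

lemma valid_witness_params: "valid_params M witness_params"
  by (cases M) (auto simp: valid_params_def witness_params_def gA_def gC_def gG_def gT_def)

definition quartet_form :: "nat \<Rightarrow> nat set \<Rightarrow> nat set \<Rightarrow> nat set \<Rightarrow> nat set \<Rightarrow> (grp list \<Rightarrow> complex) \<Rightarrow> complex" where
  "quartet_form n Q x y p q =
    q (quartet_word n Q {}) - q (quartet_word n Q x) - q (quartet_word n Q y) + q (quartet_word n Q p)"

lemma polyfun_diff: "p \<in> polyfun \<Longrightarrow> q \<in> polyfun \<Longrightarrow> (\<lambda>x. p x - q x) \<in> polyfun"
  using padd[OF _ pmult[OF pconst[of "-1"]]] by fastforce

lemma quartet_form_polyfun: "quartet_form n Q x y p \<in> polyfun"
  unfolding quartet_form_def by (intro padd polyfun_diff pvar)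

lemma quartet_form_add: "quartet_form n Q x y p (\<lambda>i. q i + r i) = quartet_form n Q x y p q + quartet_form n Q x y p r"
  by (simp add: quartet_form_def algebra_simps)

lemma polyfun_vanishes_on_zariski_closure:
  "p \<in> polyfun \<Longrightarrow> (\<And>y. y \<in> S \<Longrightarrow> p y = 0) \<Longrightarrow> x \<in> zariski_closure S \<Longrightarrow> p x = 0"
  by (simp add: zariski_closure_def)

lemma param_point_mem_variety: "valid_params M a \<Longrightarrow> param_point n T a \<in> variety M n T"
  by (auto simp: variety_def zariski_closure_def)

lemma additive_polyfun_vanishes_on_join:
  assumes "p \<in> polyfun" "\<And>x y. p (\<lambda>i. x i + y i) = p x + p y"
    and "\<And>x. x \<in> V \<Longrightarrow> p x = 0" "\<And>y. y \<in> W \<Longrightarrow> p y = 0" "z \<in> join V W"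
  shows "p z = 0"
  using assms(5) unfolding join_def
  by (rule polyfun_vanishes_on_zariski_closure[OF assms(1), rotated]) (auto simp: assms(2-4))

context quartet_tree
begin

lemma quartet_side_pair_split:
  assumes "s \<in> tree_splits" "card (quartet_side Q s) = 2"
  shows "pair_split Q (quartet_side Q s) = pair_split Q quartet_pair"
proof -
  have "s \<noteq> {}" using assms(1) by (auto simp: splits_eq)
  then have "(SOME A. A \<in> s) \<in> s" by (simp add: some_in_eq)
  then obtain u v where "{u, v} \<in> E" "quartet_side Q s = quartet_leaves (comp E {u, v} v)"
    using mem_splitE[OF assms(1)] by (metis quartet_side_def leaf_side_Int_quartet)
  then show ?thesis using pair_split_side assms(2) by simp
qed

definition quartet_coord :: "(nat set set \<Rightarrow> grp \<Rightarrow> complex) \<Rightarrow> bool \<Rightarrow> complex" where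
  "quartet_coord a off = (\<Prod>s\<in>tree_splits. quartet_factor Q a s off)"

text \<open>On the word that puts \<open>G\<close> or \<open>T\<close> on the leaves of \<open>Q\<close>, according as they lie outside or
  inside \<open>C\<close>, a split contributes a \<open>C\<close>-parameter exactly when it is the quartet split and
  \<open>C\<close> induces a different 2|2 split.\<close>

lemma param_point_quartet_word:
  assumes "valid_params M a" "C \<subseteq> Q" "even (card C)"
  shows "param_point n (V, E, lf) a (quartet_word n Q C) =
    quartet_coord a (card C = 2 \<and> pair_split Q C \<noteq> pair_split Q quartet_pair)"
proof -
  let ?off = "card C = 2 \<and> pair_split Q C \<noteq> pair_split Q quartet_pair"
  have "gsum (quartet_word n Q C) {1..n} = gA"
    using gsum_quartet_word[OF quartet_subset] quartet_subset assms(2,3) card_quartet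
    by (simp add: gA_def Int_absorb1 Int_absorb2)
  moreover have "a s (gsum (quartet_word n Q C) (SOME A. A \<in> s)) = quartet_factor Q a s ?off"
    if "s \<in> tree_splits" for s
  proof -
    let ?X = "quartet_side Q s"
    have gsum: "gsum (quartet_word n Q C) (SOME A. A \<in> s) = (odd (card ?X), odd (card (?X \<inter> C)))"
      using gsum_quartet_word[OF quartet_subset] by (simp add: quartet_side_def)
    show ?thesis
    proof (cases "odd (card ?X)")
      case True
      have "a s gT = a s gG" using assms(1) by (cases M) (auto simp: valid_params_def)
      then show ?thesis using True gsum by (cases "odd (card (?X \<inter> C))") (auto simp: quartet_factor_def gG_def gT_def)
    next
      case False
      have "?X \<subseteq> Q" "even (card ?X)" using False by (auto simp: quartet_side_def)
      then have "odd (card (?X \<inter> C)) \<longleftrightarrow> card ?X = 2 \<and> card C = 2 \<and> pair_split Q C \<noteq> pair_split Q ?X"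
        using odd_card_Int_iff[OF card_quartet _ assms(2) _ assms(3)] by blast
      also have "\<dots> \<longleftrightarrow> ?off \<and> card ?X = 2"
        using quartet_side_pair_split[OF that] by auto
      finally show ?thesis using False gsum by (auto simp: quartet_factor_def gA_def gC_def)
    qed
  qed
  ultimately show ?thesis
    by (simp add: param_point_def quartet_word_def quartet_coord_def)
qed

lemma quartet_coord_witness_params: "quartet_coord witness_params True \<noteq> quartet_coord witness_params False"
proof -
  define f where "f off s = (if odd (card (quartet_side Q s)) then 1
    else if off \<and> card (quartet_side Q s) = 2 then 1 else (2::nat))" for off s
  have coord: "quartet_coord witness_params off = of_nat (\<Prod>s\<in>tree_splits. f off s)" for off
    unfolding quartet_coord_def of_nat_prod
    by (rule prod.cong) (auto simp: quartet_factor_def witness_params_def f_def gA_def gC_def gG_def)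
  obtain u v where uv: "{u, v} \<in> E" "quartet_pair = quartet_leaves (comp E {u, v} v)"
    by (rule quartet_pair_edge)
  define s where "s = {leaf_side {u, v} u, leaf_side {u, v} v}"
  have "s \<in> tree_splits" using uv(1) by (auto simp: splits_eq s_def)
  moreover have "card (quartet_side Q s) = 2"
  proof -
    have "card (quartet_leaves (comp E {u, v} w)) = 2" if "w \<in> {u, v}" for w
      using quartet_leaves_sides[OF uv(1) that] uv(2) card_quartet_pair
        card_Diff_pair[OF card_quartet quartet_pair_subset]
      by (auto simp: pair_split_def)
    moreover have "(SOME A. A \<in> s) \<in> s" unfolding some_in_eq by (simp add: s_def)
    ultimately show ?thesis by (auto simp: quartet_side_def s_def leaf_side_Int_quartet)
  qed
  ultimately have "(\<Prod>s\<in>tree_splits. f True s) < (\<Prod>s\<in>tree_splits. f False s)"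
    by (intro prod_mono_strict[OF _ _ finite_splits]) (auto simp: f_def)
  then show ?thesis unfolding coord of_nat_eq_iff by simp
qed

lemma quartet_form_param_point:
  assumes "valid_params M a" "x \<subseteq> Q" "y \<subseteq> Q" "p \<subseteq> Q" "card x = 2" "card y = 2" "card p = 2"
  shows "quartet_form n Q x y p (param_point n (V, E, lf) a) =
    quartet_coord a False - quartet_coord a (pair_split Q x \<noteq> pair_split Q quartet_pair)
    - quartet_coord a (pair_split Q y \<noteq> pair_split Q quartet_pair)
    + quartet_coord a (pair_split Q p \<noteq> pair_split Q quartet_pair)"
  using param_point_quartet_word[OF assms(1)] assms(2-) by (simp add: quartet_form_def)

lemma quartet_form_vanishes:
  assumes "z \<in> variety M n (V, E, lf)"
    and "x \<subseteq> Q" "y \<subseteq> Q" "p \<subseteq> Q" "card x = 2" "card y = 2" "card p = 2"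
    and "pair_split Q x \<noteq> pair_split Q y" "pair_split Q p \<notin> {pair_split Q x, pair_split Q y}"
    and "\<And>t. t \<subseteq> Q \<Longrightarrow> card t = 2 \<Longrightarrow> pair_split Q t \<in> {pair_split Q x, pair_split Q y, pair_split Q p}"
    and "restr_splits Q tree_splits \<noteq> quartet_splits Q p"
  shows "quartet_form n Q x y p z = 0"
  using assms(1) unfolding variety_def
proof (rule polyfun_vanishes_on_zariski_closure[OF quartet_form_polyfun, rotated])
  fix q assume "q \<in> {param_point n (V, E, lf) a |a. valid_params M a}"
  then obtain a where a: "valid_params M a" "q = param_point n (V, E, lf) a" by blast
  have form: "quartet_form n Q x y p q = quartet_coord a False
      - quartet_coord a (pair_split Q x \<noteq> pair_split Q quartet_pair)
      - quartet_coord a (pair_split Q y \<noteq> pair_split Q quartet_pair)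
      + quartet_coord a (pair_split Q p \<noteq> pair_split Q quartet_pair)"
    using quartet_form_param_point[OF a(1) assms(2-7)] a(2) by simp
  have "pair_split Q quartet_pair \<noteq> pair_split Q p"
  proof
    assume "pair_split Q quartet_pair = pair_split Q p"
    then have "quartet_splits Q quartet_pair = quartet_splits Q p"
      by (rule quartet_splits_cong[OF quartet_pair_subset])
    then show False using assms(11) restr_splits_eq_quartet_splits by simp
  qed
  then consider "pair_split Q quartet_pair = pair_split Q x" | "pair_split Q quartet_pair = pair_split Q y"
    using assms(10)[OF quartet_pair_subset card_quartet_pair] by blast
  moreover have "pair_split Q y \<noteq> pair_split Q x" "pair_split Q p \<noteq> pair_split Q x"
    "pair_split Q p \<noteq> pair_split Q y"
    using assms(8,9) by auto
  ultimately show "quartet_form n Q x y p q = 0"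
    by cases (use form assms(8) in simp_all)
qed

lemma quartet_form_nonzero:
  assumes "x \<subseteq> Q" "y \<subseteq> Q" "card x = 2" "card y = 2"
    and "pair_split Q x \<noteq> pair_split Q quartet_pair" "pair_split Q y \<noteq> pair_split Q quartet_pair"
  shows "quartet_form n Q x y quartet_pair (param_point n (V, E, lf) witness_params) \<noteq> 0"
  using quartet_form_param_point[OF valid_witness_params assms(1,2) quartet_pair_subset assms(3,4)
      card_quartet_pair] assms(5,6) quartet_coord_witness_params
  by simp

end

theorem proposition5:
  fixes n :: nat and T1 T2 T3 :: tree and M :: model and Q :: "nat set"
  assumes "bin_tree n T1" and "bin_tree n T2" and "bin_tree n T3"
    and "Q \<subseteq> {1..n}" and "card Q = 4"
    and "restr_splits Q (splits n T3) \<notin>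
           {restr_splits Q (splits n T1), restr_splits Q (splits n T2)}"
  shows "\<not> (variety M n T3 \<subseteq> join (variety M n T1) (variety M n T2))"
proof
  assume sub: "variety M n T3 \<subseteq> join (variety M n T1) (variety M n T2)"
  obtain V1 E1 lf1 where T1: "T1 = (V1, E1, lf1)" by (cases T1) auto
  obtain V2 E2 lf2 where T2: "T2 = (V2, E2, lf2)" by (cases T2) auto
  obtain V3 E3 lf3 where T3: "T3 = (V3, E3, lf3)" by (cases T3) auto
  interpret t1: quartet_tree n V1 E1 lf1 Q using assms(1,4,5) T1 by unfold_locales auto
  interpret t2: quartet_tree n V2 E2 lf2 Q using assms(2,4,5) T2 by unfold_locales auto
  interpret t3: quartet_tree n V3 E3 lf3 Q using assms(3,4,5) T3 by unfold_locales auto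
  let ?p = t3.quartet_pair
  obtain x y where xy: "x \<subseteq> Q" "y \<subseteq> Q" "card x = 2" "card y = 2"
    "pair_split Q x \<noteq> pair_split Q y" "pair_split Q ?p \<notin> {pair_split Q x, pair_split Q y}"
    "\<And>t. t \<subseteq> Q \<Longrightarrow> card t = 2 \<Longrightarrow> pair_split Q t \<in> {pair_split Q x, pair_split Q y, pair_split Q ?p}"
    by (rule other_pair_splits[OF assms(5) t3.quartet_pair_subset t3.card_quartet_pair]) (rule that; assumption)
  have "restr_splits Q (splits n T3) = quartet_splits Q ?p"
    using t3.restr_splits_eq_quartet_splits T3 by simp
  then have other: "restr_splits Q t1.tree_splits \<noteq> quartet_splits Q ?p"
    "restr_splits Q t2.tree_splits \<noteq> quartet_splits Q ?p"
    using assms(6) T1 T2 by auto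
  have "quartet_form n Q x y ?p z = 0" if "z \<in> join (variety M n T1) (variety M n T2)" for z
  proof (rule additive_polyfun_vanishes_on_join[OF quartet_form_polyfun quartet_form_add _ _ that])
    fix z1 assume "z1 \<in> variety M n T1"
    then show "quartet_form n Q x y ?p z1 = 0"
      unfolding T1 by (rule t1.quartet_form_vanishes[OF _ xy(1,2) t3.quartet_pair_subset xy(3,4)
          t3.card_quartet_pair xy(5-7) other(1)])
  next
    fix z2 assume "z2 \<in> variety M n T2"
    then show "quartet_form n Q x y ?p z2 = 0"
      unfolding T2 by (rule t2.quartet_form_vanishes[OF _ xy(1,2) t3.quartet_pair_subset xy(3,4)
          t3.card_quartet_pair xy(5-7) other(2)])
  qed
  moreover have "param_point n T3 witness_params \<in> join (variety M n T1) (variety M n T2)"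
    using sub param_point_mem_variety[OF valid_witness_params] by blast
  moreover have "quartet_form n Q x y ?p (param_point n T3 witness_params) \<noteq> 0"
    unfolding T3 using xy(6) by (intro t3.quartet_form_nonzero[OF xy(1-4)]) auto
  ultimately show False by blast
qed

end
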